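(* For every well-filtered, coherent topological space $X$, the poset $\mathcal QX$ is a meet-continuous dcpo inf-semilattice which is well-filtered and coherent in its Scott topology. Hence $\mathcal Q\mathbb R_\ell$, $\mathcal Q^2\mathbb R_\ell$, $\ldots$ are all meet-continuous dcpo inf-semilattices which are well-filtered and coherent in their Scott topologies.
   Context: $\mathcal QX$ is the set of non-empty compact saturated subsets of $X$ ordered by reverse inclusion $\supseteq$; $\mathcal Q^{n+1}\mathbb R_\ell=\mathcal Q(\mathcal Q^n\mathbb R_\ell)$ where $\mathcal Q^n\mathbb R_\ell$ carries its Scott topology. The Sorgenfrey line $\mathbb R_\ell$ is $\mathbb R$ with the topology generated by $[a,b[$, $a<b$. A space is well-filtered if whenever a filtered family of compact saturated sets has intersection contained in an open $U$, some member of the family is contained in $U$. A space is coherent if the intersection of any two compact saturated subsets is compact. A dcpo inf-semilattice $P$ is meet-continuous if $x\wedge\sup D=\sup_{d\in D}(x\wedge d)$ for every $x\in P$ and directed $D\subseteq P$. *)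

theory Defs
  imports "HOL-Analysis.Analysis"
begin

text \<open>A subset A of the space X is saturated if it is the intersection of the open
  sets containing it (equivalently an upper set for the specialization order).\<close>
definition saturated_in :: "'a topology \<Rightarrow> 'a set \<Rightarrow> bool" where
  "saturated_in X A \<longleftrightarrow> A \<subseteq> topspace X \<and>
     (\<forall>x\<in>topspace X. (\<forall>U. openin X U \<and> A \<subseteq> U \<longrightarrow> x \<in> U) \<longrightarrow> x \<in> A)"

definition compact_saturated :: "'a topology \<Rightarrow> 'a set \<Rightarrow> bool" where
  "compact_saturated X K \<longleftrightarrow> compactin X K \<and> saturated_in X K"

definition filtered_family :: "'a set set \<Rightarrow> bool" where
  "filtered_family \<K> \<longleftrightarrow> \<K> \<noteq> {} \<and>
     (\<forall>K1\<in>\<K>. \<forall>K2\<in>\<K>. \<exists>K3\<in>\<K>. K3 \<subseteq> K1 \<and> K3 \<subseteq> K2)"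

definition well_filtered :: "'a topology \<Rightarrow> bool" where
  "well_filtered X \<longleftrightarrow>
     (\<forall>\<K> U. filtered_family \<K> \<and> (\<forall>K\<in>\<K>. compact_saturated X K) \<and> openin X U
        \<and> \<Inter>\<K> \<subseteq> U \<longrightarrow> (\<exists>K\<in>\<K>. K \<subseteq> U))"

definition coherent :: "'a topology \<Rightarrow> bool" where
  "coherent X \<longleftrightarrow>
     (\<forall>K1 K2. compact_saturated X K1 \<and> compact_saturated X K2 \<longrightarrow> compactin X (K1 \<inter> K2))"

definition poset_on :: "'a set \<Rightarrow> ('a \<Rightarrow> 'a \<Rightarrow> bool) \<Rightarrow> bool" where
  "poset_on P le \<longleftrightarrow> (\<forall>x\<in>P. le x x) \<and> (\<forall>x\<in>P. \<forall>y\<in>P. le x y \<and> le y x \<longrightarrow> x = y)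
     \<and> (\<forall>x\<in>P. \<forall>y\<in>P. \<forall>z\<in>P. le x y \<and> le y z \<longrightarrow> le x z)"

definition directed_in :: "'a set \<Rightarrow> ('a \<Rightarrow> 'a \<Rightarrow> bool) \<Rightarrow> 'a set \<Rightarrow> bool" where
  "directed_in P le D \<longleftrightarrow> D \<subseteq> P \<and> D \<noteq> {} \<and>
     (\<forall>a\<in>D. \<forall>b\<in>D. \<exists>c\<in>D. le a c \<and> le b c)"

definition is_lub :: "'a set \<Rightarrow> ('a \<Rightarrow> 'a \<Rightarrow> bool) \<Rightarrow> 'a set \<Rightarrow> 'a \<Rightarrow> bool" where
  "is_lub P le A s \<longleftrightarrow> s \<in> P \<and> (\<forall>a\<in>A. le a s) \<and> (\<forall>u\<in>P. (\<forall>a\<in>A. le a u) \<longrightarrow> le s u)"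

definition is_glb :: "'a set \<Rightarrow> ('a \<Rightarrow> 'a \<Rightarrow> bool) \<Rightarrow> 'a set \<Rightarrow> 'a \<Rightarrow> bool" where
  "is_glb P le A m \<longleftrightarrow> m \<in> P \<and> (\<forall>a\<in>A. le m a) \<and> (\<forall>u\<in>P. (\<forall>a\<in>A. le u a) \<longrightarrow> le u m)"

definition psup :: "'a set \<Rightarrow> ('a \<Rightarrow> 'a \<Rightarrow> bool) \<Rightarrow> 'a set \<Rightarrow> 'a" where
  "psup P le A = (THE s. is_lub P le A s)"

definition pinf :: "'a set \<Rightarrow> ('a \<Rightarrow> 'a \<Rightarrow> bool) \<Rightarrow> 'a \<Rightarrow> 'a \<Rightarrow> 'a" where
  "pinf P le x y = (THE m. is_glb P le {x, y} m)"

definition dcpo :: "'a set \<Rightarrow> ('a \<Rightarrow> 'a \<Rightarrow> bool) \<Rightarrow> bool" where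
  "dcpo P le \<longleftrightarrow> poset_on P le \<and> (\<forall>D. directed_in P le D \<longrightarrow> (\<exists>s. is_lub P le D s))"

definition inf_semilattice :: "'a set \<Rightarrow> ('a \<Rightarrow> 'a \<Rightarrow> bool) \<Rightarrow> bool" where
  "inf_semilattice P le \<longleftrightarrow> poset_on P le \<and> (\<forall>x\<in>P. \<forall>y\<in>P. \<exists>m. is_glb P le {x, y} m)"

definition meet_continuous :: "'a set \<Rightarrow> ('a \<Rightarrow> 'a \<Rightarrow> bool) \<Rightarrow> bool" where
  "meet_continuous P le \<longleftrightarrow>
     (\<forall>x\<in>P. \<forall>D. directed_in P le D \<longrightarrow>
        pinf P le x (psup P le D) = psup P le ((\<lambda>d. pinf P le x d) ` D))"

definition upper_in :: "'a set \<Rightarrow> ('a \<Rightarrow> 'a \<Rightarrow> bool) \<Rightarrow> 'a set \<Rightarrow> bool" where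
  "upper_in P le U \<longleftrightarrow> U \<subseteq> P \<and> (\<forall>x\<in>U. \<forall>y\<in>P. le x y \<longrightarrow> y \<in> U)"

definition scott_open :: "'a set \<Rightarrow> ('a \<Rightarrow> 'a \<Rightarrow> bool) \<Rightarrow> 'a set \<Rightarrow> bool" where
  "scott_open P le U \<longleftrightarrow> upper_in P le U \<and>
     (\<forall>D s. directed_in P le D \<and> is_lub P le D s \<and> s \<in> U \<longrightarrow> D \<inter> U \<noteq> {})"

definition scott_topology :: "'a set \<Rightarrow> ('a \<Rightarrow> 'a \<Rightarrow> bool) \<Rightarrow> 'a topology" where
  "scott_topology P le = topology (scott_open P le)"

definition Qset :: "'a topology \<Rightarrow> 'a set set" where
  "Qset X = {K. K \<noteq> {} \<and> compact_saturated X K}"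

definition Qle :: "'a set \<Rightarrow> 'a set \<Rightarrow> bool" where
  "Qle K L \<longleftrightarrow> L \<subseteq> K"

definition Qtop :: "'a topology \<Rightarrow> 'a set topology" where
  "Qtop X = scott_topology (Qset X) Qle"

definition Q_good :: "'a topology \<Rightarrow> bool" where
  "Q_good X \<longleftrightarrow> dcpo (Qset X) Qle \<and> inf_semilattice (Qset X) Qle
     \<and> meet_continuous (Qset X) Qle \<and> well_filtered (Qtop X) \<and> coherent (Qtop X)"

definition sorgenfrey :: "real topology" where
  "sorgenfrey = topology_generated_by {{a..<b} | a b. a < b}"

end

(*
  In Q X directed suprema are intersections, which stay compact and nonempty because X is
  well-filtered, and binary meets are unions; meet-continuity is then the distributivity of a
  union over a filtered intersection.

  Well-filteredness: suppose a filtered family of compact saturated subsets of Q X has its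
  intersection inside a Scott open set U but no member inside U. By Zorn, U extends to a
  maximal Scott open set M that still contains no member. For each member A, the union of
  the points of A outside M is again a point of Q X, and these points form a filtered family.
  Its intersection lies outside M, and testing the maximality of M against the Scott open sets
  M \<union> {K. K \<subseteq> V} shows that it lies in every member, hence in M: a contradiction.

  Coherence: for compact saturated A, B and a directed Scott open cover of A \<inter> B, compactness
  of A gives, for each L in B, a member U of the cover such that K \<inter> L is empty or in U for all
  K in A (coherence of X makes the sets of such K Scott open). The L admitting a fixed U form a
  Scott open set, so compactness of B yields one U for all L in B; taking K = L shows
  A \<inter> B \<subseteq> U.

  The Sorgenfrey line is Hausdorff, hence well-filtered and coherent, and both properties pass
  from X to Q X.
*)

theory Submission
  imports Defs
begin

lemma filtered_family_iff_directed_in: "filtered_family \<K> \<longleftrightarrow> directed_in UNIV (\<supseteq>) \<K>"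
  unfolding filtered_family_def directed_in_def by blast

lemma directed_in_image:
  assumes "directed_in P le D" and "\<And>a b. a \<in> D \<Longrightarrow> b \<in> D \<Longrightarrow> le a b \<Longrightarrow> le' (f a) (f b)"
    and "f ` D \<subseteq> P'"
  shows "directed_in P' le' (f ` D)"
  unfolding directed_in_def
proof (intro conjI ballI)
  fix x y assume "x \<in> f ` D" "y \<in> f ` D"
  then obtain a b where "a \<in> D" "b \<in> D" "x = f a" "y = f b" by blast
  moreover from this obtain c where "c \<in> D" "le a c" "le b c"
    using assms(1) unfolding directed_in_def by blast
  ultimately show "\<exists>z\<in>f ` D. le' x z \<and> le' y z" using assms(2) by blast
qed (use assms in \<open>auto simp: directed_in_def\<close>)

lemma directed_in_finite_upper_bound:
  assumes D: "directed_in P le D" and "transp le" and "finite F" "F \<subseteq> D"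
  shows "\<exists>d\<in>D. \<forall>a\<in>F. le a d"
  using \<open>finite F\<close> \<open>F \<subseteq> D\<close>
proof (induction F rule: finite_induct)
  case empty
  then show ?case using D unfolding directed_in_def by auto
next
  case (insert a F)
  then obtain d where d: "d \<in> D" "\<forall>b\<in>F. le b d" by auto
  obtain c where c: "c \<in> D" "le a c" "le d c"
    using D d(1) insert.prems unfolding directed_in_def by (meson insert_subset)
  have "\<forall>b\<in>insert a F. le b c" using c d(2) transpD[OF \<open>transp le\<close>] by blast
  then show ?case using c(1) by blast
qed

lemma subset_chain_directed_in:
  assumes "subset.chain A C" "C \<noteq> {}"
  shows "directed_in UNIV (\<subseteq>) C"
  unfolding directed_in_def
proof (intro conjI ballI)
  fix a b assume "a \<in> C" "b \<in> C"
  then have "a \<subseteq> b \<or> b \<subseteq> a" using assms(1) by (simp add: subset_chain_def)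
  then show "\<exists>c\<in>C. a \<subseteq> c \<and> b \<subseteq> c" using \<open>a \<in> C\<close> \<open>b \<in> C\<close> by auto
qed (use assms(2) in auto)

lemma compactin_directed_cover:
  assumes "compactin T S" "\<forall>U\<in>\<U>. openin T U" "directed_in UNIV (\<subseteq>) \<U>" "S \<subseteq> \<Union>\<U>"
  shows "\<exists>U\<in>\<U>. S \<subseteq> U"
proof -
  obtain \<F> where \<F>: "finite \<F>" "\<F> \<subseteq> \<U>" "S \<subseteq> \<Union>\<F>"
    using assms(1,2,4) unfolding compactin_def by meson
  then obtain U where "U \<in> \<U>" "\<forall>V\<in>\<F>. V \<subseteq> U"
    using directed_in_finite_upper_bound[OF assms(3) transp_on_le] by meson
  then show ?thesis using \<F>(3) by blast
qed

lemma compactin_by_directed_covers: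
  assumes "S \<subseteq> topspace T"
    and cover: "\<And>\<U>. \<forall>U\<in>\<U>. openin T U \<Longrightarrow> directed_in UNIV (\<subseteq>) \<U> \<Longrightarrow> S \<subseteq> \<Union>\<U>
      \<Longrightarrow> \<exists>U\<in>\<U>. S \<subseteq> U"
  shows "compactin T S"
  unfolding compactin_def
proof (intro conjI allI impI)
  show "S \<subseteq> topspace T" by fact
next
  fix \<V> assume \<V>: "(\<forall>V\<in>\<V>. openin T V) \<and> S \<subseteq> \<Union>\<V>"
  define \<U> where "\<U> = Union ` {\<F>. finite \<F> \<and> \<F> \<subseteq> \<V>}"
  have "directed_in UNIV (\<subseteq>) \<U>"
    unfolding directed_in_def
  proof (intro conjI ballI)
    fix A B assume "A \<in> \<U>" "B \<in> \<U>"
    then obtain \<F> \<G> where "finite \<F>" "\<F> \<subseteq> \<V>" "A = \<Union>\<F>" "finite \<G>" "\<G> \<subseteq> \<V>" "B = \<Union>\<G>"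
      unfolding \<U>_def by blast
    then have "\<F> \<union> \<G> \<in> {\<F>. finite \<F> \<and> \<F> \<subseteq> \<V>}" by auto
    then have "\<Union>(\<F> \<union> \<G>) \<in> \<U>" unfolding \<U>_def by (rule imageI)
    moreover have "A \<subseteq> \<Union>(\<F> \<union> \<G>)" "B \<subseteq> \<Union>(\<F> \<union> \<G>)"
      using \<open>A = \<Union>\<F>\<close> \<open>B = \<Union>\<G>\<close> by auto
    ultimately show "\<exists>C\<in>\<U>. A \<subseteq> C \<and> B \<subseteq> C" by blast
  qed (auto simp: \<U>_def)
  moreover have "\<forall>U\<in>\<U>. openin T U" using \<V> unfolding \<U>_def by blast
  moreover have "S \<subseteq> \<Union>\<U>"
  proof
    fix x assume "x \<in> S"
    then obtain V where "V \<in> \<V>" "x \<in> V" using \<V> by blast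
    then have "{V} \<in> {\<F>. finite \<F> \<and> \<F> \<subseteq> \<V>}" by auto
    then have "\<Union>{V} \<in> \<U>" unfolding \<U>_def by (rule imageI)
    then show "x \<in> \<Union>\<U>" using \<open>x \<in> V\<close> by auto
  qed
  ultimately obtain U where "U \<in> \<U>" "S \<subseteq> U" using cover by blast
  then show "\<exists>\<F>. finite \<F> \<and> \<F> \<subseteq> \<V> \<and> S \<subseteq> \<Union>\<F>" unfolding \<U>_def by blast
qed

lemma saturated_in_Inter:
  assumes "\<S> \<noteq> {}" "\<And>A. A \<in> \<S> \<Longrightarrow> saturated_in X A"
  shows "saturated_in X (\<Inter>\<S>)"
  unfolding saturated_in_def
proof (intro conjI ballI impI InterI)
  show "\<Inter>\<S> \<subseteq> topspace X" using assms unfolding saturated_in_def by blast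
next
  fix x A assume "x \<in> topspace X" "\<forall>U. openin X U \<and> \<Inter>\<S> \<subseteq> U \<longrightarrow> x \<in> U" "A \<in> \<S>"
  then show "x \<in> A" using assms(2)[of A] unfolding saturated_in_def by (meson Inter_lower order_trans)
qed

lemma saturated_in_separate:
  assumes "saturated_in X A" "x \<in> topspace X" "x \<notin> A"
  obtains U where "openin X U" "A \<subseteq> U" "x \<notin> U"
  using assms unfolding saturated_in_def by meson

lemma saturated_in_Union:
  assumes "\<And>A. A \<in> \<S> \<Longrightarrow> saturated_in X A"
  shows "saturated_in X (\<Union>\<S>)"
  unfolding saturated_in_def
proof (intro conjI ballI impI)
  show "\<Union>\<S> \<subseteq> topspace X" using assms unfolding saturated_in_def by blast
next
  fix x assume x: "x \<in> topspace X" and H: "\<forall>U. openin X U \<and> \<Union>\<S> \<subseteq> U \<longrightarrow> x \<in> U"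
  show "x \<in> \<Union>\<S>"
  proof (rule ccontr)
    assume "x \<notin> \<Union>\<S>"
    then have "\<forall>A\<in>\<S>. \<exists>U. openin X U \<and> A \<subseteq> U \<and> x \<notin> U"
      using saturated_in_separate[OF assms x] by (metis UnionI)
    then obtain f where f: "\<forall>A\<in>\<S>. openin X (f A) \<and> A \<subseteq> f A \<and> x \<notin> f A" by metis
    have "openin X (\<Union>(f ` \<S>)) \<and> \<Union>\<S> \<subseteq> \<Union>(f ` \<S>)" using f by blast
    with H have "x \<in> \<Union>(f ` \<S>)" by (elim allE impE)
    then obtain A where "A \<in> \<S>" "x \<in> f A" by blast
    then show False using f by blast
  qed
qed

lemma is_lub_unique: "poset_on P le \<Longrightarrow> is_lub P le A s \<Longrightarrow> is_lub P le A t \<Longrightarrow> s = t"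
  unfolding poset_on_def is_lub_def by blast

lemma is_glb_unique: "poset_on P le \<Longrightarrow> is_glb P le A m \<Longrightarrow> is_glb P le A n \<Longrightarrow> m = n"
  unfolding poset_on_def is_glb_def by blast

lemma psup_eq:
  assumes "poset_on P le" "is_lub P le A s"
  shows "psup P le A = s"
  unfolding psup_def
proof (rule the_equality)
  show "is_lub P le A s" by fact
  show "t = s" if "is_lub P le A t" for t using is_lub_unique[OF assms(1) that assms(2)] .
qed

lemma pinf_eq:
  assumes "poset_on P le" "is_glb P le {x, y} m"
  shows "pinf P le x y = m"
  unfolding pinf_def
proof (rule the_equality)
  show "is_glb P le {x, y} m" by fact
  show "n = m" if "is_glb P le {x, y} n" for n using is_glb_unique[OF assms(1) that assms(2)] .
qed

lemma scott_open_istopology: "istopology (scott_open P le)"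
  unfolding istopology_def
proof (intro conjI allI impI)
  fix S T assume S: "scott_open P le S" and T: "scott_open P le T"
  show "scott_open P le (S \<inter> T)"
    unfolding scott_open_def
  proof (intro conjI allI impI)
    show "upper_in P le (S \<inter> T)"
      using S T unfolding scott_open_def upper_in_def by auto
  next
    fix D s assume D: "directed_in P le D \<and> is_lub P le D s \<and> s \<in> S \<inter> T"
    then have "D \<inter> S \<noteq> {}" "D \<inter> T \<noteq> {}"
      using S T unfolding scott_open_def by (meson IntD1 IntD2)+
    then obtain a b where a: "a \<in> D" "a \<in> S" and b: "b \<in> D" "b \<in> T" by auto
    then obtain c where c: "c \<in> D" "le a c" "le b c" "c \<in> P"
      using D a(1) b(1) unfolding directed_in_def by (meson subsetD)
    then have "c \<in> S \<inter> T" using S T a b unfolding scott_open_def upper_in_def by auto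
    then show "D \<inter> (S \<inter> T) \<noteq> {}" using c by auto
  qed
next
  fix \<S> assume "\<forall>S\<in>\<S>. scott_open P le S"
  then show "scott_open P le (\<Union>\<S>)" unfolding scott_open_def upper_in_def by fast
qed

lemma openin_scott_topology: "openin (scott_topology P le) = scott_open P le"
  unfolding scott_topology_def by (rule topology_inverse'[OF scott_open_istopology])

lemma topspace_scott_topology [simp]: "topspace (scott_topology P le) = P"
proof -
  have "scott_open P le P"
    unfolding scott_open_def upper_in_def directed_in_def by auto
  moreover have "U \<subseteq> P" if "scott_open P le U" for U
    using that unfolding scott_open_def upper_in_def by auto
  ultimately show ?thesis
    unfolding topspace_def openin_scott_topology by auto
qed

section \<open>Q X as a meet-continuous dcpo\<close>

lemma well_filtered_Inter_compact_saturated: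
  assumes wf: "well_filtered X" and fam: "filtered_family \<K>"
    and cs: "\<forall>K\<in>\<K>. compact_saturated X K"
  shows "compact_saturated X (\<Inter>\<K>)"
proof -
  obtain K0 where "K0 \<in> \<K>" using fam unfolding filtered_family_def by auto
  have "saturated_in X (\<Inter>\<K>)"
    using fam cs by (intro saturated_in_Inter) (auto simp: filtered_family_def compact_saturated_def)
  moreover have "compactin X (\<Inter>\<K>)"
  proof (rule compactin_by_directed_covers)
    show "\<Inter>\<K> \<subseteq> topspace X"
      using cs \<open>K0 \<in> \<K>\<close> unfolding compact_saturated_def compactin_def by blast
  next
    fix \<U> assume \<U>: "\<forall>U\<in>\<U>. openin X U" "directed_in UNIV (\<subseteq>) \<U>" "\<Inter>\<K> \<subseteq> \<Union>\<U>"
    then obtain K where "K \<in> \<K>" "K \<subseteq> \<Union>\<U>"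
      using wf fam cs unfolding well_filtered_def by (meson openin_Union)
    moreover from this have "compactin X K" using cs unfolding compact_saturated_def by auto
    ultimately obtain U where "U \<in> \<U>" "K \<subseteq> U" using compactin_directed_cover \<U> by meson
    then show "\<exists>U\<in>\<U>. \<Inter>\<K> \<subseteq> U" using \<open>K \<in> \<K>\<close> by auto
  qed
  ultimately show ?thesis unfolding compact_saturated_def by auto
qed

lemma well_filtered_Inter_nonempty:
  assumes "well_filtered X" "filtered_family \<K>" "\<forall>K\<in>\<K>. compact_saturated X K" "{} \<notin> \<K>"
  shows "\<Inter>\<K> \<noteq> {}"
  using assms unfolding well_filtered_def by (metis openin_empty order_refl subset_empty)

lemma Inter_in_Qset:
  assumes "well_filtered X" "D \<subseteq> Qset X" "filtered_family D"
  shows "\<Inter>D \<in> Qset X"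
proof -
  have "\<forall>K\<in>D. compact_saturated X K" "{} \<notin> D" using assms(2) unfolding Qset_def by auto
  then show ?thesis
    using assms well_filtered_Inter_compact_saturated well_filtered_Inter_nonempty
    unfolding Qset_def by blast
qed

lemma Un_in_Qset: "K \<in> Qset X \<Longrightarrow> L \<in> Qset X \<Longrightarrow> K \<union> L \<in> Qset X"
  unfolding Qset_def compact_saturated_def
  using saturated_in_Union[of "{K, L}"] by (auto intro: compactin_Un)

lemma directed_in_Qset_iff: "directed_in (Qset X) Qle D \<longleftrightarrow> D \<subseteq> Qset X \<and> filtered_family D"
  unfolding directed_in_def filtered_family_def Qle_def by auto

lemma poset_on_Qset: "poset_on (Qset X) Qle"
  unfolding poset_on_def Qle_def by auto

lemma is_lub_Qset:
  assumes "well_filtered X" "directed_in (Qset X) Qle D"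
  shows "is_lub (Qset X) Qle D (\<Inter>D)"
  using assms Inter_in_Qset unfolding directed_in_Qset_iff is_lub_def Qle_def by auto

lemma psup_Qset:
  "well_filtered X \<Longrightarrow> directed_in (Qset X) Qle D \<Longrightarrow> psup (Qset X) Qle D = \<Inter>D"
  by (rule psup_eq[OF poset_on_Qset is_lub_Qset])

lemma is_glb_Qset: "K \<in> Qset X \<Longrightarrow> L \<in> Qset X \<Longrightarrow> is_glb (Qset X) Qle {K, L} (K \<union> L)"
  unfolding is_glb_def Qle_def using Un_in_Qset by auto

lemma pinf_Qset: "K \<in> Qset X \<Longrightarrow> L \<in> Qset X \<Longrightarrow> pinf (Qset X) Qle K L = K \<union> L"
  by (rule pinf_eq[OF poset_on_Qset is_glb_Qset])

lemma dcpo_Qset: "well_filtered X \<Longrightarrow> dcpo (Qset X) Qle"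
  unfolding dcpo_def using poset_on_Qset is_lub_Qset by blast

lemma inf_semilattice_Qset: "inf_semilattice (Qset X) Qle"
  unfolding inf_semilattice_def using poset_on_Qset is_glb_Qset by blast

lemma meet_continuous_Qset:
  assumes wf: "well_filtered X"
  shows "meet_continuous (Qset X) Qle"
  unfolding meet_continuous_def
proof (intro ballI allI impI)
  fix K D assume K: "K \<in> Qset X" and D: "directed_in (Qset X) Qle D"
  then have "D \<subseteq> Qset X" "D \<noteq> {}" unfolding directed_in_def by auto
  have KD: "directed_in (Qset X) Qle ((\<union>) K ` D)"
    by (rule directed_in_image[OF D]) (use K \<open>D \<subseteq> Qset X\<close> Un_in_Qset in \<open>auto simp: Qle_def\<close>)
  have "\<Inter>D \<in> Qset X" using Inter_in_Qset[OF wf] D unfolding directed_in_Qset_iff by auto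
  then have "pinf (Qset X) Qle K (psup (Qset X) Qle D) = K \<union> \<Inter>D"
    using psup_Qset[OF wf D] pinf_Qset[OF K] by simp
  also have "\<dots> = \<Inter>((\<union>) K ` D)" using \<open>D \<noteq> {}\<close> by auto
  also have "\<dots> = psup (Qset X) Qle ((\<union>) K ` D)" using psup_Qset[OF wf KD] by simp
  also have "(\<union>) K ` D = pinf (Qset X) Qle K ` D"
    using pinf_Qset[OF K] \<open>D \<subseteq> Qset X\<close> by (intro image_cong) auto
  finally show "pinf (Qset X) Qle K (psup (Qset X) Qle D) = psup (Qset X) Qle (pinf (Qset X) Qle K ` D)" .
qed

section \<open>Well-filteredness of Q X\<close>

lemma topspace_Qtop [simp]: "topspace (Qtop X) = Qset X"
  unfolding Qtop_def by simp

lemma openin_Qtop: "openin (Qtop X) \<U> \<longleftrightarrow> scott_open (Qset X) Qle \<U>"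
  unfolding Qtop_def openin_scott_topology ..

lemma openin_Qtop_Inter:
  assumes wf: "well_filtered X" and "openin (Qtop X) \<U>" "D \<subseteq> Qset X" "filtered_family D" "\<Inter>D \<in> \<U>"
  shows "\<exists>K\<in>D. K \<in> \<U>"
proof -
  have D: "directed_in (Qset X) Qle D" using assms(3,4) directed_in_Qset_iff by auto
  then have "D \<inter> \<U> \<noteq> {}"
    using assms(2,5) is_lub_Qset[OF wf D] unfolding openin_Qtop scott_open_def by meson
  then show ?thesis by auto
qed

lemma openin_QtopI:
  assumes wf: "well_filtered X" and "\<U> \<subseteq> Qset X"
    and down: "\<And>K L. K \<in> \<U> \<Longrightarrow> L \<in> Qset X \<Longrightarrow> L \<subseteq> K \<Longrightarrow> L \<in> \<U>"
    and Inter: "\<And>D. D \<subseteq> Qset X \<Longrightarrow> filtered_family D \<Longrightarrow> \<Inter>D \<in> \<U> \<Longrightarrow> \<exists>K\<in>D. K \<in> \<U>"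
  shows "openin (Qtop X) \<U>"
  unfolding openin_Qtop scott_open_def upper_in_def
proof (intro conjI allI impI ballI)
  show "\<U> \<subseteq> Qset X" by fact
next
  fix K L assume "K \<in> \<U>" "L \<in> Qset X" "Qle K L"
  then show "L \<in> \<U>" using down unfolding Qle_def by auto
next
  fix D s assume D: "directed_in (Qset X) Qle D \<and> is_lub (Qset X) Qle D s \<and> s \<in> \<U>"
  then have "s = \<Inter>D" using is_lub_unique[OF poset_on_Qset] is_lub_Qset[OF wf] by metis
  then have "\<exists>K\<in>D. K \<in> \<U>" using Inter D unfolding directed_in_Qset_iff by auto
  then show "D \<inter> \<U> \<noteq> {}" by auto
qed

lemma openin_Qtop_downward:
  "openin (Qtop X) \<U> \<Longrightarrow> K \<in> \<U> \<Longrightarrow> L \<in> Qset X \<Longrightarrow> L \<subseteq> K \<Longrightarrow> L \<in> \<U>"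
  unfolding openin_Qtop scott_open_def upper_in_def Qle_def by auto

lemma saturated_in_Qtop_downward:
  assumes "saturated_in (Qtop X) \<A>" "K \<in> \<A>" "L \<in> Qset X" "L \<subseteq> K"
  shows "L \<in> \<A>"
proof -
  have "L \<in> \<U>" if "openin (Qtop X) \<U>" "\<A> \<subseteq> \<U>" for \<U>
    using openin_Qtop_downward[OF that(1)] assms(2-4) that(2) by blast
  then show ?thesis using assms(1,3) unfolding saturated_in_def by auto
qed

definition Qbox :: "'a topology \<Rightarrow> 'a set \<Rightarrow> 'a set set" where
  "Qbox X V = {K \<in> Qset X. K \<subseteq> V}"

lemma openin_Qtop_Qbox:
  assumes wf: "well_filtered X" and V: "openin X V"
  shows "openin (Qtop X) (Qbox X V)"
proof (rule openin_QtopI[OF wf])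
  fix D assume D: "D \<subseteq> Qset X" "filtered_family D" "\<Inter>D \<in> Qbox X V"
  then have "\<forall>K\<in>D. compact_saturated X K" "\<Inter>D \<subseteq> V" unfolding Qset_def Qbox_def by auto
  then obtain K where "K \<in> D" "K \<subseteq> V" using wf D(2) V unfolding well_filtered_def by meson
  then show "\<exists>K\<in>D. K \<in> Qbox X V" using D(1) unfolding Qbox_def by auto
qed (auto simp: Qbox_def)

lemma compactin_Union_Qtop:
  assumes wf: "well_filtered X" and \<S>: "compactin (Qtop X) \<S>"
  shows "compactin X (\<Union>\<S>)"
proof -
  have S: "\<S> \<subseteq> Qset X" using compactin_subset_topspace[OF \<S>] by simp
  show ?thesis
  proof (rule compactin_by_directed_covers)
    show "\<Union>\<S> \<subseteq> topspace X" using S unfolding Qset_def compact_saturated_def compactin_def by auto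
  next
    fix \<U> assume \<U>: "\<forall>U\<in>\<U>. openin X U" "directed_in UNIV (\<subseteq>) \<U>" "\<Union>\<S> \<subseteq> \<Union>\<U>"
    have "directed_in UNIV (\<subseteq>) (Qbox X ` \<U>)"
      by (rule directed_in_image[OF \<U>(2)]) (auto simp: Qbox_def)
    moreover have "\<forall>\<B>\<in>Qbox X ` \<U>. openin (Qtop X) \<B>" using \<U>(1) openin_Qtop_Qbox[OF wf] by auto
    moreover have "\<S> \<subseteq> \<Union>(Qbox X ` \<U>)"
    proof
      fix K assume "K \<in> \<S>"
      then have "compactin X K" "K \<subseteq> \<Union>\<U>" "K \<in> Qset X"
        using S \<U>(3) unfolding Qset_def compact_saturated_def by auto
      then obtain U where "U \<in> \<U>" "K \<subseteq> U" using compactin_directed_cover \<U>(1,2) by meson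
      then show "K \<in> \<Union>(Qbox X ` \<U>)" using \<open>K \<in> Qset X\<close> unfolding Qbox_def by auto
    qed
    ultimately have "\<exists>\<B>\<in>Qbox X ` \<U>. \<S> \<subseteq> \<B>" using compactin_directed_cover[OF \<S>] by meson
    then show "\<exists>U\<in>\<U>. \<Union>\<S> \<subseteq> U" unfolding Qbox_def by auto
  qed
qed

lemma maximal_open_avoiding_compacts:
  assumes cpt: "\<forall>K\<in>\<K>. compactin T K" and U: "openin T U" "\<forall>K\<in>\<K>. \<not> K \<subseteq> U"
  obtains M where "openin T M" "U \<subseteq> M" "\<forall>K\<in>\<K>. \<not> K \<subseteq> M"
    "\<And>V. openin T V \<Longrightarrow> M \<subset> V \<Longrightarrow> \<exists>K\<in>\<K>. K \<subseteq> V"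
proof -
  define \<A> where "\<A> = {V. openin T V \<and> U \<subseteq> V \<and> (\<forall>K\<in>\<K>. \<not> K \<subseteq> V)}"
  have "\<exists>M\<in>\<A>. \<forall>V\<in>\<A>. M \<subseteq> V \<longrightarrow> V = M"
  proof (rule subset_Zorn_nonempty)
    show "\<A> \<noteq> {}" using U unfolding \<A>_def by auto
  next
    fix \<C> assume \<C>: "\<C> \<noteq> {}" "subset.chain \<A> \<C>"
    then have "\<C> \<subseteq> \<A>" unfolding subset_chain_def by auto
    have "\<not> K \<subseteq> \<Union>\<C>" if "K \<in> \<K>" for K
    proof
      assume "K \<subseteq> \<Union>\<C>"
      moreover have "\<forall>V\<in>\<C>. openin T V" using \<open>\<C> \<subseteq> \<A>\<close> unfolding \<A>_def by auto
      ultimately have "\<exists>V\<in>\<C>. K \<subseteq> V"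
        using compactin_directed_cover[OF cpt[rule_format, OF that]] subset_chain_directed_in[OF \<C>(2,1)]
        by blast
      then obtain V where "V \<in> \<C>" "K \<subseteq> V" by blast
      then show False using \<open>\<C> \<subseteq> \<A>\<close> that unfolding \<A>_def by auto
    qed
    then show "\<Union>\<C> \<in> \<A>" using \<C>(1) \<open>\<C> \<subseteq> \<A>\<close> unfolding \<A>_def by auto
  qed
  then obtain M where "M \<in> \<A>" and max: "\<And>V. V \<in> \<A> \<Longrightarrow> M \<subseteq> V \<Longrightarrow> V = M" by auto
  show thesis
  proof (rule that)
    show "openin T M" "U \<subseteq> M" "\<forall>K\<in>\<K>. \<not> K \<subseteq> M" using \<open>M \<in> \<A>\<close> unfolding \<A>_def by auto
    show "\<exists>K\<in>\<K>. K \<subseteq> V" if "openin T V" "M \<subset> V" for V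
      using max[of V] that \<open>U \<subseteq> M\<close> unfolding \<A>_def by auto
  qed
qed

lemma Union_diff_in_Qset:
  assumes wf: "well_filtered X" and \<A>: "compactin (Qtop X) \<A>" and \<M>: "openin (Qtop X) \<M>"
    and "\<not> \<A> \<subseteq> \<M>"
  shows "\<Union>(\<A> - \<M>) \<in> Qset X"
proof -
  have "\<A> \<subseteq> Qset X" using compactin_subset_topspace[OF \<A>] by simp
  have "closedin (Qtop X) (Qset X - \<M>)" using \<M> by (metis closedin_diff closedin_topspace topspace_Qtop)
  with \<A> have "compactin (Qtop X) (\<A> \<inter> (Qset X - \<M>))" by (rule compact_Int_closedin)
  moreover have "\<A> \<inter> (Qset X - \<M>) = \<A> - \<M>" using \<open>\<A> \<subseteq> Qset X\<close> by auto
  ultimately have "compactin X (\<Union>(\<A> - \<M>))" using compactin_Union_Qtop[OF wf] by simp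
  moreover have "saturated_in X (\<Union>(\<A> - \<M>))"
    using \<open>\<A> \<subseteq> Qset X\<close> by (intro saturated_in_Union) (auto simp: Qset_def compact_saturated_def)
  moreover have "\<Union>(\<A> - \<M>) \<noteq> {}" using \<open>\<not> \<A> \<subseteq> \<M>\<close> \<open>\<A> \<subseteq> Qset X\<close> unfolding Qset_def by auto
  ultimately show ?thesis unfolding Qset_def compact_saturated_def by auto
qed

lemma Union_diff_maximal_open_subset:
  assumes wf: "well_filtered X" and \<M>: "openin (Qtop X) \<M>"
    and max: "\<And>\<V>. openin (Qtop X) \<V> \<Longrightarrow> \<M> \<subset> \<V> \<Longrightarrow> \<exists>\<A>\<in>\<K>. \<A> \<subseteq> \<V>"
    and L: "L \<in> Qset X - \<M>" and V: "openin X V" "L \<subseteq> V"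
  shows "\<exists>\<A>\<in>\<K>. \<Union>(\<A> - \<M>) \<subseteq> V"
proof -
  have "openin (Qtop X) (\<M> \<union> Qbox X V)" using \<M> openin_Qtop_Qbox[OF wf V(1)] by auto
  moreover have "\<M> \<subset> \<M> \<union> Qbox X V" using L V(2) unfolding Qbox_def by auto
  ultimately obtain \<A> where "\<A> \<in> \<K>" "\<A> \<subseteq> \<M> \<union> Qbox X V" using max by meson
  then show ?thesis unfolding Qbox_def by auto
qed

lemma mem_if_subset_Union_diff_maximal_open:
  assumes wf: "well_filtered X" and \<M>: "openin (Qtop X) \<M>"
    and max: "\<And>\<V>. openin (Qtop X) \<V> \<Longrightarrow> \<M> \<subset> \<V> \<Longrightarrow> \<exists>\<A>\<in>\<K>. \<A> \<subseteq> \<V>"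
    and \<A>\<^sub>0: "saturated_in (Qtop X) \<A>\<^sub>0" "\<not> \<A>\<^sub>0 \<subseteq> \<M>"
    and K: "K \<in> Qset X" "\<And>\<A>. \<A> \<in> \<K> \<Longrightarrow> K \<subseteq> \<Union>(\<A> - \<M>)"
  shows "K \<in> \<A>\<^sub>0"
proof (rule ccontr)
  assume "K \<notin> \<A>\<^sub>0"
  obtain L where L: "L \<in> \<A>\<^sub>0" "L \<notin> \<M>" using \<A>\<^sub>0(2) by auto
  then have "L \<in> Qset X" using \<A>\<^sub>0(1) unfolding saturated_in_def by auto
  have "\<not> K \<subseteq> L" using saturated_in_Qtop_downward[OF \<A>\<^sub>0(1) L(1) K(1)] \<open>K \<notin> \<A>\<^sub>0\<close> by auto
  then obtain x where "x \<in> K" "x \<notin> L" by auto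
  moreover have "x \<in> topspace X" using \<open>x \<in> K\<close> K(1)
    unfolding Qset_def compact_saturated_def saturated_in_def by auto
  moreover have "saturated_in X L" using \<open>L \<in> Qset X\<close> unfolding Qset_def compact_saturated_def by auto
  ultimately obtain V where V: "openin X V" "L \<subseteq> V" "x \<notin> V"
    using saturated_in_separate by metis
  have "\<exists>\<A>\<in>\<K>. \<Union>(\<A> - \<M>) \<subseteq> V"
    by (rule Union_diff_maximal_open_subset[OF wf \<M> max]) (use L \<open>L \<in> Qset X\<close> V in auto)
  then show False using K(2) \<open>x \<in> K\<close> \<open>x \<notin> V\<close> by blast
qed

lemma Inter_not_subset_maximal_open:
  assumes wf: "well_filtered X" and fam: "filtered_family \<K>"
    and cs: "\<forall>\<A>\<in>\<K>. compact_saturated (Qtop X) \<A>"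
    and \<M>: "openin (Qtop X) \<M>" "\<forall>\<A>\<in>\<K>. \<not> \<A> \<subseteq> \<M>"
    and max: "\<And>\<V>. openin (Qtop X) \<V> \<Longrightarrow> \<M> \<subset> \<V> \<Longrightarrow> \<exists>\<A>\<in>\<K>. \<A> \<subseteq> \<V>"
  shows "\<not> \<Inter>\<K> \<subseteq> \<M>"
proof -
  have \<K>: "\<A> \<subseteq> Qset X" if "\<A> \<in> \<K>" for \<A>
    using cs that compactin_subset_topspace unfolding compact_saturated_def by fastforce
  define w where "w \<A> = \<Union>(\<A> - \<M>)" for \<A>
  have "w ` \<K> \<subseteq> Qset X"
    using Union_diff_in_Qset[OF wf _ \<M>(1)] cs \<M>(2) unfolding w_def compact_saturated_def by auto
  have "filtered_family (w ` \<K>)"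
    using fam unfolding filtered_family_iff_directed_in
    by (rule directed_in_image) (auto simp: w_def)
  define K where "K = \<Inter>(w ` \<K>)"
  have "K \<in> Qset X" unfolding K_def by (rule Inter_in_Qset[OF wf]) fact+
  have "K \<notin> \<M>"
  proof
    assume "K \<in> \<M>"
    then obtain \<A> where "\<A> \<in> \<K>" "w \<A> \<in> \<M>"
      using openin_Qtop_Inter[OF wf \<M>(1) \<open>w ` \<K> \<subseteq> Qset X\<close> \<open>filtered_family (w ` \<K>)\<close>]
      unfolding K_def by auto
    moreover obtain L where L: "L \<in> \<A>" "L \<notin> \<M>" using \<M>(2) \<open>\<A> \<in> \<K>\<close> by auto
    moreover have "L \<subseteq> w \<A>" "L \<in> Qset X" using L \<K> \<open>\<A> \<in> \<K>\<close> unfolding w_def by auto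
    ultimately have "L \<in> \<M>" using openin_Qtop_downward[OF \<M>(1)] by auto
    then show False using L(2) by contradiction
  qed
  moreover have "K \<in> \<A>" if "\<A> \<in> \<K>" for \<A>
  proof (rule mem_if_subset_Union_diff_maximal_open[OF wf \<M>(1) max _ _ \<open>K \<in> Qset X\<close>])
    show "saturated_in (Qtop X) \<A>" "\<not> \<A> \<subseteq> \<M>" using that cs \<M>(2) unfolding compact_saturated_def by auto
    show "K \<subseteq> \<Union>(\<A>' - \<M>)" if "\<A>' \<in> \<K>" for \<A>' using that unfolding K_def w_def by auto
  qed
  ultimately show ?thesis by auto
qed

lemma well_filtered_Qtop:
  assumes wf: "well_filtered X"
  shows "well_filtered (Qtop X)"
  unfolding well_filtered_def
proof (intro allI impI)
  fix \<K> \<U>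
  assume "filtered_family \<K> \<and> (\<forall>\<A>\<in>\<K>. compact_saturated (Qtop X) \<A>) \<and> openin (Qtop X) \<U> \<and> \<Inter>\<K> \<subseteq> \<U>"
  then have fam: "filtered_family \<K>" and cs: "\<forall>\<A>\<in>\<K>. compact_saturated (Qtop X) \<A>"
    and \<U>: "openin (Qtop X) \<U>" "\<Inter>\<K> \<subseteq> \<U>" by auto
  show "\<exists>\<A>\<in>\<K>. \<A> \<subseteq> \<U>"
  proof (rule ccontr)
    assume "\<not> (\<exists>\<A>\<in>\<K>. \<A> \<subseteq> \<U>)"
    then have avoid: "\<forall>\<A>\<in>\<K>. \<not> \<A> \<subseteq> \<U>" by auto
    have cpt: "\<forall>\<A>\<in>\<K>. compactin (Qtop X) \<A>" using cs unfolding compact_saturated_def by auto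
    obtain \<M> where \<M>: "openin (Qtop X) \<M>" "\<U> \<subseteq> \<M>" "\<forall>\<A>\<in>\<K>. \<not> \<A> \<subseteq> \<M>"
      and max: "\<And>\<V>. openin (Qtop X) \<V> \<Longrightarrow> \<M> \<subset> \<V> \<Longrightarrow> \<exists>\<A>\<in>\<K>. \<A> \<subseteq> \<V>"
      by (rule maximal_open_avoiding_compacts[OF cpt \<U>(1) avoid], rule that)
    have "\<not> \<Inter>\<K> \<subseteq> \<M>" by (rule Inter_not_subset_maximal_open[OF wf fam cs \<M>(1,3) max])
    then show False using \<U>(2) \<M>(2) by auto
  qed
qed

section \<open>Coherence of Q X\<close>

lemma compact_saturated_Int:
  assumes "coherent X" "compact_saturated X K" "compact_saturated X L"
  shows "compact_saturated X (K \<inter> L)"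
proof -
  have "saturated_in X (\<Inter>{K, L})"
    using assms(2,3) by (intro saturated_in_Inter) (auto simp: compact_saturated_def)
  then show ?thesis using assms unfolding coherent_def compact_saturated_def by auto
qed

lemma Int_in_Qset:
  "coherent X \<Longrightarrow> K \<in> Qset X \<Longrightarrow> L \<in> Qset X \<Longrightarrow> K \<inter> L \<noteq> {} \<Longrightarrow> K \<inter> L \<in> Qset X"
  unfolding Qset_def using compact_saturated_Int by auto

text \<open>For points K, L of Q X, K \<inter> L is their join whenever it is nonempty. The disjoint K are
  included to make the set downward closed.\<close>

definition Qjoin_preimage :: "'a topology \<Rightarrow> 'a set set \<Rightarrow> 'a set \<Rightarrow> 'a set set" where
  "Qjoin_preimage X \<U> L = {K \<in> Qset X. K \<inter> L = {} \<or> K \<inter> L \<in> \<U>}"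

lemma Qjoin_preimage_commute:
  "K \<in> Qset X \<Longrightarrow> L \<in> Qset X \<Longrightarrow> K \<in> Qjoin_preimage X \<U> L \<longleftrightarrow> L \<in> Qjoin_preimage X \<U> K"
  unfolding Qjoin_preimage_def by (auto simp: Int_commute)

lemma Qjoin_preimage_mono: "\<U> \<subseteq> \<U>' \<Longrightarrow> Qjoin_preimage X \<U> L \<subseteq> Qjoin_preimage X \<U>' L"
  unfolding Qjoin_preimage_def by auto

lemma Qjoin_preimage_antimono:
  assumes coh: "coherent X" and \<U>: "openin (Qtop X) \<U>" and L: "L' \<in> Qset X" "L' \<subseteq> L"
  shows "Qjoin_preimage X \<U> L \<subseteq> Qjoin_preimage X \<U> L'"
proof
  fix K assume K: "K \<in> Qjoin_preimage X \<U> L"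
  then have "K \<in> Qset X" unfolding Qjoin_preimage_def by auto
  show "K \<in> Qjoin_preimage X \<U> L'"
  proof (cases "K \<inter> L' = {}")
    case False
    then have "K \<inter> L \<in> \<U>" using K L(2) unfolding Qjoin_preimage_def by auto
    moreover have "K \<inter> L' \<in> Qset X" using Int_in_Qset[OF coh \<open>K \<in> Qset X\<close> L(1) False] .
    ultimately have "K \<inter> L' \<in> \<U>" using openin_Qtop_downward[OF \<U>] L(2) by auto
    then show ?thesis using \<open>K \<in> Qset X\<close> unfolding Qjoin_preimage_def by auto
  qed (use \<open>K \<in> Qset X\<close> in \<open>auto simp: Qjoin_preimage_def\<close>)
qed

lemma openin_Qtop_Qjoin_preimage:
  assumes wf: "well_filtered X" and coh: "coherent X" and \<U>: "openin (Qtop X) \<U>" and L: "L \<in> Qset X"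
  shows "openin (Qtop X) (Qjoin_preimage X \<U> L)"
proof (rule openin_QtopI[OF wf])
  fix K K' assume K: "K \<in> Qjoin_preimage X \<U> L" and K': "K' \<in> Qset X" "K' \<subseteq> K"
  then have "K \<in> Qset X" unfolding Qjoin_preimage_def by auto
  then have "L \<in> Qjoin_preimage X \<U> K" using K Qjoin_preimage_commute L by auto
  then have "L \<in> Qjoin_preimage X \<U> K'" using Qjoin_preimage_antimono[OF coh \<U> K'] by auto
  then show "K' \<in> Qjoin_preimage X \<U> L" using Qjoin_preimage_commute K'(1) L by auto
next
  fix D assume D: "D \<subseteq> Qset X" "filtered_family D" "\<Inter>D \<in> Qjoin_preimage X \<U> L"
  have "D \<noteq> {}" using D(2) unfolding filtered_family_def by auto
  have "L \<in> Qset X" "compact_saturated X L" using L unfolding Qset_def by auto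
  define E where "E = (\<lambda>K. K \<inter> L) ` D"
  have "filtered_family E"
    using D(2) unfolding filtered_family_iff_directed_in E_def by (rule directed_in_image) auto
  have "\<Inter>E = \<Inter>D \<inter> L" unfolding E_def using \<open>D \<noteq> {}\<close> by auto
  show "\<exists>K\<in>D. K \<in> Qjoin_preimage X \<U> L"
  proof (cases "\<Inter>D \<inter> L = {}")
    case True
    have "\<forall>K\<in>E. compact_saturated X K"
      using D(1) compact_saturated_Int[OF coh _ \<open>compact_saturated X L\<close>] unfolding E_def Qset_def by auto
    then obtain K where "K \<in> D" "K \<inter> L = {}"
      using wf \<open>filtered_family E\<close> True \<open>\<Inter>E = \<Inter>D \<inter> L\<close> unfolding well_filtered_def E_def
      by (metis (no_types, lifting) imageE openin_empty order_refl subset_empty)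
    then show ?thesis using D(1) unfolding Qjoin_preimage_def by auto
  next
    case False
    then have "\<Inter>E \<in> \<U>" using D(3) \<open>\<Inter>E = \<Inter>D \<inter> L\<close> unfolding Qjoin_preimage_def by auto
    moreover have "E \<subseteq> Qset X"
      using D(1) False Int_in_Qset[OF coh _ L] unfolding E_def by auto
    ultimately obtain K where "K \<in> D" "K \<inter> L \<in> \<U>"
      using openin_Qtop_Inter[OF wf \<U> _ \<open>filtered_family E\<close>] unfolding E_def by auto
    then show ?thesis using D(1) unfolding Qjoin_preimage_def by auto
  qed
qed (auto simp: Qjoin_preimage_def)

lemma openin_Qtop_Qjoin_preimage_superset:
  assumes wf: "well_filtered X" and coh: "coherent X"
    and \<A>: "compactin (Qtop X) \<A>" and \<U>: "openin (Qtop X) \<U>"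
  shows "openin (Qtop X) {L \<in> Qset X. \<A> \<subseteq> Qjoin_preimage X \<U> L}"
proof (rule openin_QtopI[OF wf])
  fix L L' assume "L \<in> {L \<in> Qset X. \<A> \<subseteq> Qjoin_preimage X \<U> L}" and L': "L' \<in> Qset X" "L' \<subseteq> L"
  then show "L' \<in> {L \<in> Qset X. \<A> \<subseteq> Qjoin_preimage X \<U> L}"
    using Qjoin_preimage_antimono[OF coh \<U> L'] by auto
next
  fix D assume D: "D \<subseteq> Qset X" "filtered_family D" "\<Inter>D \<in> {L \<in> Qset X. \<A> \<subseteq> Qjoin_preimage X \<U> L}"
  have "\<A> \<subseteq> Qset X" using compactin_subset_topspace[OF \<A>] by simp
  have "directed_in UNIV (\<subseteq>) (Qjoin_preimage X \<U> ` D)"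
    using D(2) unfolding filtered_family_iff_directed_in
    by (rule directed_in_image) (use D(1) in \<open>auto intro: Qjoin_preimage_antimono[OF coh \<U>, THEN subsetD]\<close>)
  moreover have "\<forall>\<V>\<in>Qjoin_preimage X \<U> ` D. openin (Qtop X) \<V>"
    using D(1) openin_Qtop_Qjoin_preimage[OF wf coh \<U>] by auto
  moreover have "\<A> \<subseteq> \<Union>(Qjoin_preimage X \<U> ` D)"
  proof
    fix K assume "K \<in> \<A>"
    then have "K \<in> Qset X" using \<open>\<A> \<subseteq> Qset X\<close> by auto
    moreover have "K \<in> Qjoin_preimage X \<U> (\<Inter>D)" "\<Inter>D \<in> Qset X" using D(3) \<open>K \<in> \<A>\<close> by auto
    ultimately have "\<Inter>D \<in> Qjoin_preimage X \<U> K" using Qjoin_preimage_commute by auto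
    then obtain L where "L \<in> D" "L \<in> Qjoin_preimage X \<U> K"
      using openin_Qtop_Inter[OF wf openin_Qtop_Qjoin_preimage[OF wf coh \<U> \<open>K \<in> Qset X\<close>] D(1,2)] by auto
    moreover from this have "K \<in> Qjoin_preimage X \<U> L"
      using Qjoin_preimage_commute[OF \<open>K \<in> Qset X\<close>, of L] D(1) by auto
    ultimately show "K \<in> \<Union>(Qjoin_preimage X \<U> ` D)" by auto
  qed
  ultimately have "\<exists>\<V>\<in>Qjoin_preimage X \<U> ` D. \<A> \<subseteq> \<V>" using compactin_directed_cover[OF \<A>] by meson
  then show "\<exists>L\<in>D. L \<in> {L \<in> Qset X. \<A> \<subseteq> Qjoin_preimage X \<U> L}" using D(1) by auto
qed auto

lemma ex_Qjoin_preimage_superset: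
  assumes wf: "well_filtered X" and coh: "coherent X"
    and \<A>: "compactin (Qtop X) \<A>" "saturated_in (Qtop X) \<A>"
    and \<B>: "saturated_in (Qtop X) \<B>" "L \<in> \<B>"
    and \<W>: "\<forall>\<U>\<in>\<W>. openin (Qtop X) \<U>" "directed_in UNIV (\<subseteq>) \<W>" "\<A> \<inter> \<B> \<subseteq> \<Union>\<W>"
  shows "\<exists>\<U>\<in>\<W>. \<A> \<subseteq> Qjoin_preimage X \<U> L"
proof -
  have "L \<in> Qset X" using \<B> unfolding saturated_in_def by auto
  have "directed_in UNIV (\<subseteq>) ((\<lambda>\<U>. Qjoin_preimage X \<U> L) ` \<W>)"
    by (rule directed_in_image[OF \<W>(2)]) (auto intro: Qjoin_preimage_mono[THEN subsetD])
  moreover have "\<forall>\<V>\<in>(\<lambda>\<U>. Qjoin_preimage X \<U> L) ` \<W>. openin (Qtop X) \<V>"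
    using \<W>(1) openin_Qtop_Qjoin_preimage[OF wf coh _ \<open>L \<in> Qset X\<close>] by auto
  moreover have "\<A> \<subseteq> \<Union>((\<lambda>\<U>. Qjoin_preimage X \<U> L) ` \<W>)"
  proof
    fix K assume "K \<in> \<A>"
    then have "K \<in> Qset X" using compactin_subset_topspace[OF \<A>(1)] by auto
    obtain \<U> where "\<U> \<in> \<W>" "K \<inter> L = {} \<or> K \<inter> L \<in> \<U>"
    proof (cases "K \<inter> L = {}")
      case True
      then show thesis using that \<W>(2) unfolding directed_in_def by auto
    next
      case False
      then have "K \<inter> L \<in> Qset X" using Int_in_Qset[OF coh \<open>K \<in> Qset X\<close> \<open>L \<in> Qset X\<close>] by auto
      then have "K \<inter> L \<in> \<A> \<inter> \<B>"
        using saturated_in_Qtop_downward \<A>(2) \<B> \<open>K \<in> \<A>\<close> by (metis IntI Int_lower1 Int_lower2)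
      then show thesis using that \<W>(3) by auto
    qed
    then show "K \<in> \<Union>((\<lambda>\<U>. Qjoin_preimage X \<U> L) ` \<W>)"
      using \<open>K \<in> Qset X\<close> unfolding Qjoin_preimage_def by auto
  qed
  ultimately have "\<exists>\<V>\<in>(\<lambda>\<U>. Qjoin_preimage X \<U> L) ` \<W>. \<A> \<subseteq> \<V>"
    using compactin_directed_cover[OF \<A>(1)] by meson
  then show ?thesis by auto
qed

lemma coherent_Qtop:
  assumes wf: "well_filtered X" and coh: "coherent X"
  shows "coherent (Qtop X)"
  unfolding coherent_def
proof (intro allI impI)
  fix \<A> \<B> assume "compact_saturated (Qtop X) \<A> \<and> compact_saturated (Qtop X) \<B>"
  then have \<A>: "compactin (Qtop X) \<A>" "saturated_in (Qtop X) \<A>"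
    and \<B>: "compactin (Qtop X) \<B>" "saturated_in (Qtop X) \<B>"
    unfolding compact_saturated_def by auto
  have "\<A> \<subseteq> Qset X" using compactin_subset_topspace[OF \<A>(1)] by simp
  show "compactin (Qtop X) (\<A> \<inter> \<B>)"
  proof (rule compactin_by_directed_covers)
    show "\<A> \<inter> \<B> \<subseteq> topspace (Qtop X)" using \<open>\<A> \<subseteq> Qset X\<close> by auto
  next
    fix \<W> assume \<W>: "\<forall>\<U>\<in>\<W>. openin (Qtop X) \<U>" "directed_in UNIV (\<subseteq>) \<W>" "\<A> \<inter> \<B> \<subseteq> \<Union>\<W>"
    define C where "C \<U> = {L \<in> Qset X. \<A> \<subseteq> Qjoin_preimage X \<U> L}" for \<U>
    have "directed_in UNIV (\<subseteq>) (C ` \<W>)"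
      by (rule directed_in_image[OF \<W>(2)])
        (auto simp: C_def intro: Qjoin_preimage_mono[THEN subsetD])
    moreover have "\<forall>\<V>\<in>C ` \<W>. openin (Qtop X) \<V>"
      using \<W>(1) openin_Qtop_Qjoin_preimage_superset[OF wf coh \<A>(1)] unfolding C_def by auto
    moreover have "\<B> \<subseteq> \<Union>(C ` \<W>)"
    proof
      fix L assume "L \<in> \<B>"
      then obtain \<U> where "\<U> \<in> \<W>" "\<A> \<subseteq> Qjoin_preimage X \<U> L"
        using ex_Qjoin_preimage_superset[OF wf coh \<A> \<B>(2) _ \<W>] by auto
      then show "L \<in> \<Union>(C ` \<W>)"
        using \<open>L \<in> \<B>\<close> \<B>(2) unfolding C_def saturated_in_def by auto
    qed
    ultimately have "\<exists>\<V>\<in>C ` \<W>. \<B> \<subseteq> \<V>" using compactin_directed_cover[OF \<B>(1)] by meson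
    then obtain \<U> where "\<U> \<in> \<W>" "\<B> \<subseteq> C \<U>" by auto
    moreover have "K \<in> \<U>" if "K \<in> \<A> \<inter> \<B>" and "\<B> \<subseteq> C \<U>" for K
    proof -
      have "K \<in> Qjoin_preimage X \<U> K" "K \<noteq> {}"
        using that \<open>\<A> \<subseteq> Qset X\<close> unfolding C_def Qset_def by auto
      then show ?thesis unfolding Qjoin_preimage_def by auto
    qed
    ultimately show "\<exists>\<U>\<in>\<W>. \<A> \<inter> \<B> \<subseteq> \<U>" by auto
  qed
qed

section \<open>The Sorgenfrey line\<close>

lemma Hausdorff_imp_well_filtered:
  assumes H: "Hausdorff_space X"
  shows "well_filtered X"
  unfolding well_filtered_def
proof (intro allI impI)
  fix \<K> U assume "filtered_family \<K> \<and> (\<forall>K\<in>\<K>. compact_saturated X K) \<and> openin X U \<and> \<Inter>\<K> \<subseteq> U"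
  then have fam: "filtered_family \<K>" and cpt: "\<forall>K\<in>\<K>. compactin X K" and U: "openin X U" "\<Inter>\<K> \<subseteq> U"
    unfolding compact_saturated_def by auto
  obtain K\<^sub>0 where "K\<^sub>0 \<in> \<K>" using fam unfolding filtered_family_def by auto
  define \<C> where "\<C> = insert (topspace X - U) \<K>"
  have "\<forall>C\<in>\<C>. closedin X C"
    using U(1) cpt compactin_imp_closedin[OF H] unfolding \<C>_def by auto
  moreover have "K\<^sub>0 \<inter> \<Inter>\<C> = {}" using U(2) unfolding \<C>_def by auto
  ultimately obtain \<F> where \<F>: "finite \<F>" "\<F> \<subseteq> \<C>" "K\<^sub>0 \<inter> \<Inter>\<F> = {}"
    using cpt \<open>K\<^sub>0 \<in> \<K>\<close> unfolding compactin_fip by meson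
  have "finite (insert K\<^sub>0 (\<F> - {topspace X - U}))" "insert K\<^sub>0 (\<F> - {topspace X - U}) \<subseteq> \<K>"
    using \<F>(1,2) \<open>K\<^sub>0 \<in> \<K>\<close> unfolding \<C>_def by auto
  from directed_in_finite_upper_bound[OF fam[unfolded filtered_family_iff_directed_in] transp_on_ge this]
  obtain K where K: "K \<in> \<K>" "\<forall>F\<in>insert K\<^sub>0 (\<F> - {topspace X - U}). K \<subseteq> F"
    by auto
  have "K \<subseteq> topspace X" using cpt K(1) compactin_subset_topspace by auto
  then have "K \<subseteq> U" using K(2) \<F>(3) by blast
  then show "\<exists>K\<in>\<K>. K \<subseteq> U" using K(1) by auto
qed

lemma Hausdorff_imp_coherent: "Hausdorff_space X \<Longrightarrow> coherent X"
  unfolding coherent_def compact_saturated_def by (auto intro: compactin_Int)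

lemma openin_sorgenfrey_atLeastLessThan: "a < b \<Longrightarrow> openin sorgenfrey {a..<b}"
  unfolding sorgenfrey_def by (rule topology_generated_by_Basis) auto

lemma Hausdorff_sorgenfrey: "Hausdorff_space sorgenfrey"
proof -
  have separated: "\<exists>U V. openin sorgenfrey U \<and> openin sorgenfrey V \<and> x \<in> U \<and> y \<in> V \<and> disjnt U V"
    if "x < y" for x y :: real
    using that openin_sorgenfrey_atLeastLessThan[of x y] openin_sorgenfrey_atLeastLessThan[of y "y + 1"]
    by (intro exI[of _ "{x..<y}"] exI[of _ "{y..<y + 1}"]) (auto simp: disjnt_def)
  show ?thesis
    unfolding Hausdorff_space_def
    by (metis separated disjnt_sym linorder_neq_iff)
qed

lemma Q_good_if_well_filtered_coherent: "well_filtered X \<Longrightarrow> coherent X \<Longrightarrow> Q_good X"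
  unfolding Q_good_def
  using dcpo_Qset inf_semilattice_Qset meet_continuous_Qset well_filtered_Qtop coherent_Qtop by blast

lemma Q_good_Qtop: "Q_good X \<Longrightarrow> Q_good (Qtop X)"
  using Q_good_if_well_filtered_coherent unfolding Q_good_def by blast

theorem proposition4p24:
  shows "(\<forall>X :: 'a topology. well_filtered X \<and> coherent X \<longrightarrow> Q_good X)
    \<and> Q_good sorgenfrey
    \<and> Q_good (Qtop sorgenfrey)
    \<and> Q_good (Qtop (Qtop sorgenfrey))
    \<and> Q_good (Qtop (Qtop (Qtop sorgenfrey)))"
proof -
  have "Q_good sorgenfrey"
    using Q_good_if_well_filtered_coherent Hausdorff_imp_well_filtered Hausdorff_imp_coherent
      Hausdorff_sorgenfrey by blast
  then show ?thesis by (intro conjI allI impI Q_good_Qtop) (auto intro: Q_good_if_well_filtered_coherent)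
qed

end
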